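(* Let $\alpha\in\{\frac13,\frac12\}$. For any two BISO channels $W_1:X\mapsto Y_1$ and $W_2:X\mapsto Y_2$ with the same $\alpha$-capacity, $W_1$ is $\alpha$-more capable than $W_2$ and $W_2$ is $\alpha$-more capable than $W_1$.
   Context: A binary input symmetric output (BISO) channel has input alphabet $\{0,1\}$ and a finite output alphabet $\{0,\pm1,\dots,\pm l\}$ with $P_{Y|X}(y|0)=P_{Y|X}(-y|1)$ for all $y$. Sibson's Rényi mutual information of an input distribution $P_X$ on $\{0,1\}$ and channel $P_{Y|X}$ is $I^S_\alpha(X:Y)=\frac{\alpha}{\alpha-1}\log\sum_y\big(\sum_x P_X(x)P_{Y|X}(y|x)^\alpha\big)^{1/\alpha}$; the $\alpha$-capacity is $C_\alpha(P_{Y|X})=\sup_{P_X}I^S_\alpha(X:Y)$. A channel $W_1:X\mapsto Y_1$ is $\alpha$-more capable than $W_2:X\mapsto Y_2$ if $I^S_\alpha(X:Y_1)\ge I^S_\alpha(X:Y_2)$ for every input distribution $P_X$. *)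

theory Defs
  imports Complex_Main
begin

text \<open>Input alphabet {0,1} (as nat), output alphabet {-l..l} (as int).
  A channel is a transition function W y x = P(y|x).\<close>

definition out_alph :: "nat \<Rightarrow> int set" where
  "out_alph l = {- int l .. int l}"

definition is_BISO :: "nat \<Rightarrow> (int \<Rightarrow> nat \<Rightarrow> real) \<Rightarrow> bool" where
  "is_BISO l W \<longleftrightarrow>
     (\<forall>x\<in>{0,1}. (\<forall>y\<in>out_alph l. W y x \<ge> 0) \<and> (\<Sum>y\<in>out_alph l. W y x) = 1) \<and>
     (\<forall>y\<in>out_alph l. W y 0 = W (- y) 1)"

definition input_dist :: "(nat \<Rightarrow> real) \<Rightarrow> bool" where
  "input_dist P \<longleftrightarrow> P 0 \<ge> 0 \<and> P 1 \<ge> 0 \<and> P 0 + P 1 = 1"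

definition sibson_MI :: "real \<Rightarrow> (nat \<Rightarrow> real) \<Rightarrow> nat \<Rightarrow> (int \<Rightarrow> nat \<Rightarrow> real) \<Rightarrow> real" where
  "sibson_MI \<alpha> P l W =
     \<alpha> / (\<alpha> - 1) * ln (\<Sum>y\<in>out_alph l. (\<Sum>x\<in>{0::nat,1}. P x * W y x powr \<alpha>) powr (1 / \<alpha>))"

definition alpha_capacity :: "real \<Rightarrow> nat \<Rightarrow> (int \<Rightarrow> nat \<Rightarrow> real) \<Rightarrow> real" where
  "alpha_capacity \<alpha> l W = (SUP P\<in>{P. input_dist P}. sibson_MI \<alpha> P l W)"

definition alpha_more_capable ::
  "real \<Rightarrow> nat \<Rightarrow> (int \<Rightarrow> nat \<Rightarrow> real) \<Rightarrow> nat \<Rightarrow> (int \<Rightarrow> nat \<Rightarrow> real) \<Rightarrow> bool" where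
  "alpha_more_capable \<alpha> l1 W1 l2 W2 \<longleftrightarrow>
     (\<forall>P. input_dist P \<longrightarrow> sibson_MI \<alpha> P l1 W1 \<ge> sibson_MI \<alpha> P l2 W2)"

end

theory Submission
  imports Defs "HOL-Analysis.Convex"
begin

text \<open>For \<open>\<alpha> = 1/n\<close> with \<open>n \<in> {2, 3}\<close>, expand the \<open>n\<close>-th power in the Sibson sum binomially.
  The pure terms sum to \<open>p\<^sup>n + q\<^sup>n\<close>, and the mixed terms are Chernoff-type coefficients
  \<open>\<Sum>\<^sub>y W(y|0)\<^bsup>1-t\<^esup> W(y|1)\<^bsup>t\<^esup>\<close>; output symmetry makes the coefficients for \<open>t\<close> and
  \<open>1 - t\<close> agree, so the sum collapses to \<open>1 - n p q (1 - \<rho>)\<close> with the single channel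
  parameter \<open>\<rho>\<close> of exponent \<open>t = \<alpha>\<close>. (For \<open>n \<ge> 4\<close> a second parameter appears.)
  Hence \<open>I\<^sub>\<alpha>\<close> is a fixed decreasing function of \<open>\<rho>\<close> and \<open>p q\<close>, maximised at the uniform
  input, so the capacity determines \<open>\<rho>\<close> and with it the whole of \<open>P \<mapsto> I\<^sub>\<alpha>\<close>.\<close>

lemma powr_power_nonneg:
  fixes x :: real
  assumes "0 \<le> x" "n \<noteq> 0"
  shows "(x powr a) ^ n = x powr (real n * a)"
  using assms by (cases "x = 0") (simp_all add: powr_power)

lemma powr_mult_powr_le_convex_comb:
  fixes a b t :: real
  assumes "0 \<le> a" "0 \<le> b" "0 \<le> t" "t \<le> 1"
  shows "a powr (1 - t) * b powr t \<le> (1 - t) * a + t * b"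
proof (cases "a = 0 \<or> b = 0")
  case True
  then show ?thesis using assms by auto
next
  case False
  then show ?thesis using assms by (intro Youngs_inequality_0) auto
qed

lemma input_dist_prod_le:
  assumes "input_dist P"
  shows "P 0 * P 1 \<le> 1/4"
proof -
  have "4 * (P 0 * P 1) = (P 0 + P 1)\<^sup>2 - (P 0 - P 1)\<^sup>2"
    by (simp add: power2_eq_square algebra_simps)
  also have "\<dots> = 1 - (P 0 - P 1)\<^sup>2" using assms by (simp add: input_dist_def)
  finally show ?thesis using zero_le_power2[of "P 0 - P 1"] by linarith
qed

lemma sum_out_alph_reflect: "(\<Sum>y\<in>out_alph l. g (- y)) = (\<Sum>y\<in>out_alph l. g y)"
  by (rule sum.reindex_bij_witness[of _ uminus uminus]) (auto simp: out_alph_def)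

lemma is_BISO_D:
  assumes "is_BISO l W" "y \<in> out_alph l"
  shows "0 \<le> W y 0" "0 \<le> W y 1" "W y 0 = W (- y) 1" "W y 1 = W (- y) 0"
proof -
  have "- y \<in> out_alph l" using assms(2) by (auto simp: out_alph_def)
  then show "0 \<le> W y 0" "0 \<le> W y 1" "W y 0 = W (- y) 1" "W y 1 = W (- y) 0"
    using assms unfolding is_BISO_def by auto
qed

lemma is_BISO_sum_eq_1:
  assumes "is_BISO l W"
  shows "(\<Sum>y\<in>out_alph l. W y 0) = 1" "(\<Sum>y\<in>out_alph l. W y 1) = 1"
  using assms unfolding is_BISO_def by auto

definition chernoff_coeff :: "nat \<Rightarrow> (int \<Rightarrow> nat \<Rightarrow> real) \<Rightarrow> real \<Rightarrow> real" where
  "chernoff_coeff l W t = (\<Sum>y\<in>out_alph l. W y 0 powr (1 - t) * W y 1 powr t)"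

lemma chernoff_coeff_nonneg: "0 \<le> chernoff_coeff l W t"
  unfolding chernoff_coeff_def by (intro sum_nonneg) simp

lemma chernoff_coeff_le_1:
  assumes "is_BISO l W" "0 \<le> t" "t \<le> 1"
  shows "chernoff_coeff l W t \<le> 1"
proof -
  have "chernoff_coeff l W t \<le> (\<Sum>y\<in>out_alph l. (1 - t) * W y 0 + t * W y 1)"
    unfolding chernoff_coeff_def
    using assms is_BISO_D(1,2)[OF assms(1)] by (intro sum_mono powr_mult_powr_le_convex_comb) auto
  also have "\<dots> = 1"
    using is_BISO_sum_eq_1[OF assms(1)] by (simp add: sum.distrib flip: sum_distrib_left)
  finally show ?thesis .
qed

lemma chernoff_coeff_BISO_swap:
  assumes "is_BISO l W"
  shows "chernoff_coeff l W (1 - t) = chernoff_coeff l W t"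
proof -
  have "chernoff_coeff l W (1 - t) = (\<Sum>y\<in>out_alph l. W (- y) 0 powr (1 - t) * W (- y) 1 powr t)"
    unfolding chernoff_coeff_def
  proof (intro sum.cong refl)
    fix y assume "y \<in> out_alph l"
    from is_BISO_D(3,4)[OF assms this]
    show "W y 0 powr (1 - (1 - t)) * W y 1 powr (1 - t) = W (- y) 0 powr (1 - t) * W (- y) 1 powr t"
      by simp
  qed
  also have "\<dots> = chernoff_coeff l W t"
    unfolding chernoff_coeff_def by (rule sum_out_alph_reflect)
  finally show ?thesis .
qed

lemma power2_add_powr_half:
  fixes p q a b :: real
  assumes "0 \<le> a" "0 \<le> b"
  shows "(p * a powr (1/2) + q * b powr (1/2))\<^sup>2
    = p\<^sup>2 * a + q\<^sup>2 * b + 2 * (p * q) * (a powr (1/2) * b powr (1/2))"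
proof -
  have "(x powr (1/2))\<^sup>2 = x" if "0 \<le> x" for x :: real
    using powr_power_nonneg[OF that, of 2 "1/2"] that by simp
  with assms show ?thesis by (simp add: power2_eq_square algebra_simps)
qed

lemma power3_add_powr_third:
  fixes p q a b :: real
  assumes "0 \<le> a" "0 \<le> b"
  shows "(p * a powr (1/3) + q * b powr (1/3)) ^ 3
    = p ^ 3 * a + q ^ 3 * b + 3 * (p\<^sup>2 * q) * (a powr (2/3) * b powr (1/3))
      + 3 * (p * q\<^sup>2) * (a powr (1/3) * b powr (2/3))"
proof -
  have "(x powr (1/3)) ^ 3 = x" "(x powr (1/3))\<^sup>2 = x powr (2/3)" if "0 \<le> x" for x :: real
    using powr_power_nonneg[OF that, of 3 "1/3"] powr_power_nonneg[OF that, of 2 "1/3"] that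
    by simp_all
  with assms show ?thesis by (simp add: power2_eq_square power3_eq_cube algebra_simps)
qed

lemma sibson_sum_half:
  assumes "is_BISO l W" "input_dist P"
  shows "(\<Sum>y\<in>out_alph l. (\<Sum>x\<in>{0::nat,1}. P x * W y x powr (1/2)) powr (1 / (1/2)))
    = 1 - 2 * (P 0 * P 1) * (1 - chernoff_coeff l W (1/2))"
proof -
  have p: "0 \<le> P 0" "0 \<le> P 1" "P 0 + P 1 = 1" using assms(2) by (auto simp: input_dist_def)
  have "(\<Sum>y\<in>out_alph l. (\<Sum>x\<in>{0::nat,1}. P x * W y x powr (1/2)) powr (1 / (1/2)))
      = (\<Sum>y\<in>out_alph l. (P 0)\<^sup>2 * W y 0 + (P 1)\<^sup>2 * W y 1
          + 2 * (P 0 * P 1) * (W y 0 powr (1/2) * W y 1 powr (1/2)))"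
    using p is_BISO_D(1,2)[OF assms(1)] by (intro sum.cong refl) (simp add: power2_add_powr_half)
  also have "\<dots> = (P 0)\<^sup>2 + (P 1)\<^sup>2 + 2 * (P 0 * P 1) * chernoff_coeff l W (1/2)"
    using is_BISO_sum_eq_1[OF assms(1)]
    by (simp add: chernoff_coeff_def sum.distrib flip: sum_distrib_left)
  also have "\<dots> = (P 0 + P 1)\<^sup>2 - 2 * (P 0 * P 1) * (1 - chernoff_coeff l W (1/2))"
    by (simp add: power2_eq_square algebra_simps)
  finally show ?thesis using p(3) by simp
qed

lemma sibson_sum_third:
  assumes "is_BISO l W" "input_dist P"
  shows "(\<Sum>y\<in>out_alph l. (\<Sum>x\<in>{0::nat,1}. P x * W y x powr (1/3)) powr (1 / (1/3)))
    = 1 - 3 * (P 0 * P 1) * (1 - chernoff_coeff l W (1/3))"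
proof -
  have p: "0 \<le> P 0" "0 \<le> P 1" "P 0 + P 1 = 1" using assms(2) by (auto simp: input_dist_def)
  have swap: "chernoff_coeff l W (2/3) = chernoff_coeff l W (1/3)"
    using chernoff_coeff_BISO_swap[OF assms(1), of "1/3"] by simp
  have "(\<Sum>y\<in>out_alph l. (\<Sum>x\<in>{0::nat,1}. P x * W y x powr (1/3)) powr (1 / (1/3)))
      = (\<Sum>y\<in>out_alph l. P 0 ^ 3 * W y 0 + P 1 ^ 3 * W y 1
          + 3 * ((P 0)\<^sup>2 * P 1) * (W y 0 powr (2/3) * W y 1 powr (1/3))
          + 3 * (P 0 * (P 1)\<^sup>2) * (W y 0 powr (1/3) * W y 1 powr (2/3)))"
    using p is_BISO_D(1,2)[OF assms(1)] by (intro sum.cong refl) (simp add: power3_add_powr_third)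
  also have "\<dots> = P 0 ^ 3 + P 1 ^ 3 + 3 * ((P 0)\<^sup>2 * P 1) * chernoff_coeff l W (1/3)
      + 3 * (P 0 * (P 1)\<^sup>2) * chernoff_coeff l W (2/3)"
    using is_BISO_sum_eq_1[OF assms(1)]
    by (simp add: chernoff_coeff_def sum.distrib flip: sum_distrib_left)
  also have "\<dots> = (P 0 + P 1) ^ 3 - 3 * (P 0 * P 1) * (P 0 + P 1) * (1 - chernoff_coeff l W (1/3))"
    unfolding swap by (simp add: power2_eq_square power3_eq_cube algebra_simps)
  finally show ?thesis using p(3) by simp
qed

definition sibson_profile :: "real \<Rightarrow> real \<Rightarrow> real \<Rightarrow> real" where
  "sibson_profile \<alpha> \<rho> s = \<alpha> / (\<alpha> - 1) * ln (1 - s * (1 - \<rho>) / \<alpha>)"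

lemma sibson_MI_BISO:
  assumes "\<alpha> \<in> {1/3, 1/2}" "is_BISO l W" "input_dist P"
  shows "sibson_MI \<alpha> P l W = sibson_profile \<alpha> (chernoff_coeff l W \<alpha>) (P 0 * P 1)"
proof -
  from assms(1) consider (third) "\<alpha> = 1/3" | (half) "\<alpha> = 1/2" by blast
  then show ?thesis
  proof cases
    case third
    show ?thesis using sibson_sum_third[OF assms(2,3)]
      unfolding third by (simp add: sibson_MI_def sibson_profile_def mult_ac)
  next
    case half
    show ?thesis using sibson_sum_half[OF assms(2,3)]
      unfolding half by (simp add: sibson_MI_def sibson_profile_def mult_ac)
  qed
qed

lemma sibson_profile_arg_pos:
  fixes \<alpha> \<rho> s :: real
  assumes "1/4 < \<alpha>" "0 \<le> \<rho>" "\<rho> \<le> 1" "s \<le> 1/4"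
  shows "0 < 1 - s * (1 - \<rho>) / \<alpha>"
proof -
  have "s * (1 - \<rho>) \<le> 1/4"
  proof (cases "0 \<le> s")
    case True
    then show ?thesis using assms mult_left_mono[of "1 - \<rho>" 1 s] by simp
  next
    case False
    then show ?thesis using assms mult_nonpos_nonneg[of s "1 - \<rho>"] by simp
  qed
  then show ?thesis using assms by (simp add: field_simps)
qed

lemma sibson_profile_mono:
  assumes "1/4 < \<alpha>" "\<alpha> < 1" "0 \<le> \<rho>" "\<rho> \<le> 1" "s \<le> s'" "s' \<le> 1/4"
  shows "sibson_profile \<alpha> \<rho> s \<le> sibson_profile \<alpha> \<rho> s'"
proof -
  have "s * (1 - \<rho>) / \<alpha> \<le> s' * (1 - \<rho>) / \<alpha>"
    using assms by (intro divide_right_mono mult_right_mono) auto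
  then have "ln (1 - s' * (1 - \<rho>) / \<alpha>) \<le> ln (1 - s * (1 - \<rho>) / \<alpha>)"
    using sibson_profile_arg_pos[OF assms(1,3,4,6)] by (intro ln_mono) auto
  moreover have "\<alpha> / (\<alpha> - 1) \<le> 0" using assms(1,2) by (simp add: divide_nonneg_neg)
  ultimately show ?thesis unfolding sibson_profile_def by (rule mult_left_mono_neg)
qed

lemma sibson_profile_inj:
  assumes "1/4 < \<alpha>" "\<alpha> < 1" "0 \<le> \<rho>" "\<rho> \<le> 1" "0 \<le> \<rho>'" "\<rho>' \<le> 1"
    and "sibson_profile \<alpha> \<rho> (1/4) = sibson_profile \<alpha> \<rho>' (1/4)"
  shows "\<rho> = \<rho>'"
proof -
  have "ln (1 - (1/4) * (1 - \<rho>) / \<alpha>) = ln (1 - (1/4) * (1 - \<rho>') / \<alpha>)"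
    using assms by (simp add: sibson_profile_def)
  then have "1 - (1/4) * (1 - \<rho>) / \<alpha> = 1 - (1/4) * (1 - \<rho>') / \<alpha>"
    using sibson_profile_arg_pos[of \<alpha>] assms(1,3-6) by simp
  then show ?thesis using assms(1) by simp
qed

lemma alpha_capacity_BISO:
  assumes "\<alpha> \<in> {1/3, 1/2}" "is_BISO l W"
  shows "alpha_capacity \<alpha> l W = sibson_profile \<alpha> (chernoff_coeff l W \<alpha>) (1/4)"
  unfolding alpha_capacity_def
proof (rule cSup_eq_maximum)
  let ?uniform = "\<lambda>_::nat. 1/2 :: real"
  have "input_dist ?uniform" by (simp add: input_dist_def)
  then show "sibson_profile \<alpha> (chernoff_coeff l W \<alpha>) (1/4)
      \<in> (\<lambda>P. sibson_MI \<alpha> P l W) ` {P. input_dist P}"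
    using sibson_MI_BISO[OF assms] by (intro image_eqI[of _ _ ?uniform]) auto
next
  have \<alpha>: "1/4 < \<alpha>" "\<alpha> < 1" "0 \<le> \<alpha>" "\<alpha> \<le> 1" using assms(1) by auto
  fix I assume "I \<in> (\<lambda>P. sibson_MI \<alpha> P l W) ` {P. input_dist P}"
  then obtain P where "input_dist P" "I = sibson_MI \<alpha> P l W" by blast
  then show "I \<le> sibson_profile \<alpha> (chernoff_coeff l W \<alpha>) (1/4)"
    using sibson_MI_BISO[OF assms] input_dist_prod_le \<alpha>
      chernoff_coeff_nonneg chernoff_coeff_le_1[OF assms(2)]
    by (auto intro: sibson_profile_mono)
qed

theorem corollary1:
  fixes \<alpha> :: real and l1 l2 :: nat and W1 W2 :: "int \<Rightarrow> nat \<Rightarrow> real"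
  assumes "\<alpha> \<in> {1/3, 1/2}"
    and "is_BISO l1 W1" and "is_BISO l2 W2"
    and "alpha_capacity \<alpha> l1 W1 = alpha_capacity \<alpha> l2 W2"
  shows "alpha_more_capable \<alpha> l1 W1 l2 W2 \<and> alpha_more_capable \<alpha> l2 W2 l1 W1"
proof -
  have \<alpha>: "1/4 < \<alpha>" "\<alpha> < 1" using assms(1) by auto
  have "chernoff_coeff l1 W1 \<alpha> \<le> 1" "chernoff_coeff l2 W2 \<alpha> \<le> 1"
    using assms(1-3) by (auto intro: chernoff_coeff_le_1)
  then have "chernoff_coeff l1 W1 \<alpha> = chernoff_coeff l2 W2 \<alpha>"
    using assms(4) alpha_capacity_BISO[OF assms(1,2)] alpha_capacity_BISO[OF assms(1,3)]
    by (intro sibson_profile_inj[OF \<alpha> chernoff_coeff_nonneg _ chernoff_coeff_nonneg]) simp_all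
  then have "sibson_MI \<alpha> P l1 W1 = sibson_MI \<alpha> P l2 W2" if "input_dist P" for P
    using sibson_MI_BISO[OF assms(1,2) that] sibson_MI_BISO[OF assms(1,3) that] by simp
  then show ?thesis unfolding alpha_more_capable_def by simp
qed

end
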